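(* Let $p$ be an odd prime. Let $\mathcal{L}=(L_1,\dots,L_m)$ be a square-independent system of linear forms in $d$ variables over $\mathbb{F}_p$ and let $\Gamma_2=(q_1,\dots,q_{d_2})$ be a quadratic map from $\mathbb{F}_p^n$ to $\mathbb{F}_p^{d_2}$ of rank at least $r$. Let $\phi_1,\dots,\phi_m$ be linear maps from $(\mathbb{F}_p^n)^d$ to $\mathbb{F}_p^{d_2}$ and let $b_1,\dots,b_m\in\mathbb{F}_p^{d_2}$. Let $\mathbf{x}=(x_1,\dots,x_d)$ be chosen uniformly at random from $(\mathbb{F}_p^n)^d$. Then the probability that $\Gamma_2(L_i(\mathbf{x}))=\phi_i(\mathbf{x})+b_i$ for every $i=1,\dots,m$ differs from $p^{-md_2}$ by at most $p^{-r/2}$.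
   Context: A linear form in $d$ variables is $L(x_1,\dots,x_d)=\sum_{r=1}^d\gamma_rx_r$ with $\gamma_r\in\mathbb{F}_p$; for $\mathbf{x}\in(\mathbb{F}_p^n)^d$, $L(\mathbf{x})=\sum_r\gamma_rx_r\in\mathbb{F}_p^n$. A system $(L_1,\dots,L_m)$ with $L_i=\sum_r\gamma^{(i)}_rx_r$ is square-independent if the $d\times d$ matrices $(\gamma^{(i)}_r\gamma^{(i)}_s)_{r,s}$, $i=1,\dots,m$, are linearly independent over $\mathbb{F}_p$. A quadratic form on $\mathbb{F}_p^n$ is $q(x)=x^TMx$ with $M$ a symmetric matrix over $\mathbb{F}_p$; its associated symmetric bilinear form is $\beta(x,y)=(q(x+y)-q(x)-q(y))/2$. A quadratic map $\Gamma_2:\mathbb{F}_p^n\to\mathbb{F}_p^{d_2}$ is $x\mapsto(q_1(x),\dots,q_{d_2}(x))$ with $q_j$ quadratic forms; it has rank at least $r$ if, with $\beta_j$ the bilinear form of $q_j$, the bilinear form $\sum_j\lambda_j\beta_j$ has rank at least $r$ for every $(\lambda_1,\dots,\lambda_{d_2})\in\mathbb{F}_p^{d_2}\setminus\{0\}$. *)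

theory Defs
  imports "Jordan_Normal_Form.DL_Rank" "HOL-Computational_Algebra.Primes"
begin

text \<open>F_p is modelled as an arbitrary field type 'a with CARD('a) = p prime
(every field with p elements is F_p).
A d-tuple of vectors (an element of (F_p^n)^d) is a function nat => 'a vec whose
entries at indices < d lie in carrier_vec n and which is 0 at indices >= d.\<close>

definition tuple_space :: "nat \<Rightarrow> nat \<Rightarrow> (nat \<Rightarrow> 'a::field vec) set" where
  "tuple_space n d = {xs. (\<forall>r<d. xs r \<in> carrier_vec n) \<and> (\<forall>r\<ge>d. xs r = 0\<^sub>v n)}"

definition eval_form :: "nat \<Rightarrow> nat \<Rightarrow> (nat \<Rightarrow> 'a::field) \<Rightarrow> (nat \<Rightarrow> 'a vec) \<Rightarrow> 'a vec" where
  "eval_form n d g xs = finsum_vec TYPE('a) n (\<lambda>r. g r \<cdot>\<^sub>v xs r) {0..<d}"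

text \<open>Square-independence of the system (L_1..L_m), L_i having coefficients gamma i r:
the d x d matrices (gamma i r * gamma i s) are linearly independent.\<close>
definition square_independent :: "nat \<Rightarrow> nat \<Rightarrow> (nat \<Rightarrow> nat \<Rightarrow> 'a::field) \<Rightarrow> bool" where
  "square_independent m d gamma \<longleftrightarrow>
     (\<forall>c::nat \<Rightarrow> 'a. (\<forall>r<d. \<forall>s<d. (\<Sum>i<m. c i * (gamma i r * gamma i s)) = 0)
        \<longrightarrow> (\<forall>i<m. c i = 0))"

definition qform :: "'a::field mat \<Rightarrow> 'a vec \<Rightarrow> 'a" where
  "qform M x = x \<bullet> (M *\<^sub>v x)"

definition assoc_bilin :: "'a::field mat \<Rightarrow> 'a vec \<Rightarrow> 'a vec \<Rightarrow> 'a" where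
  "assoc_bilin M x y = (qform M (x + y) - qform M x - qform M y) / 2"

definition quadratic_form_matrix :: "nat \<Rightarrow> 'a::field mat \<Rightarrow> bool" where
  "quadratic_form_matrix n M \<longleftrightarrow> M \<in> carrier_mat n n \<and> transpose_mat M = M"

definition bilin_rank :: "nat \<Rightarrow> ('a::field vec \<Rightarrow> 'a vec \<Rightarrow> 'a) \<Rightarrow> nat" where
  "bilin_rank n B = vec_space.rank n (mat n n (\<lambda>(a, b). B (unit_vec n a) (unit_vec n b)))"

definition quad_map_rank_ge :: "nat \<Rightarrow> nat \<Rightarrow> (nat \<Rightarrow> 'a::field mat) \<Rightarrow> nat \<Rightarrow> bool" where
  "quad_map_rank_ge n d2 Ms r \<longleftrightarrow>
     (\<forall>lam::nat \<Rightarrow> 'a. (\<exists>j<d2. lam j \<noteq> 0) \<longrightarrow>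
        bilin_rank n (\<lambda>x y. \<Sum>j<d2. lam j * assoc_bilin (Ms j) x y) \<ge> r)"

definition quad_map :: "nat \<Rightarrow> (nat \<Rightarrow> 'a::field mat) \<Rightarrow> 'a vec \<Rightarrow> 'a vec" where
  "quad_map d2 Ms x = vec d2 (\<lambda>j. qform (Ms j) x)"

definition tuple_linear :: "nat \<Rightarrow> nat \<Rightarrow> nat \<Rightarrow> ((nat \<Rightarrow> 'a::field vec) \<Rightarrow> 'a vec) \<Rightarrow> bool" where
  "tuple_linear n d d2 f \<longleftrightarrow>
     (\<forall>xs\<in>tuple_space n d. f xs \<in> carrier_vec d2) \<and>
     (\<forall>xs\<in>tuple_space n d. \<forall>ys\<in>tuple_space n d. f (\<lambda>r. xs r + ys r) = f xs + f ys) \<and>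
     (\<forall>c. \<forall>xs\<in>tuple_space n d. f (\<lambda>r. c \<cdot>\<^sub>v xs r) = c \<cdot>\<^sub>v f xs)"

end

theory Submission
  imports Defs "HOL-Library.Cardinality" "HOL-Number_Theory.Residues"
begin

text \<open>Write \<open>F\<^sub>i\<^sub>j(x) = q\<^sub>j(L\<^sub>i x) - \<phi>\<^sub>i(x)\<^sub>j - b\<^sub>i\<^sub>j\<close> and let \<open>e\<close> be a nontrivial additive
character of \<open>\<bbbF>\<^sub>p\<close>. By orthogonality of characters, \<open>p\<^sup>m\<^sup>d\<^sup>2\<close> times the number of solutions
equals \<open>\<Sum>\<^sub>\<lambda> \<Sum>\<^sub>x e(\<Sum> \<lambda>\<^sub>i\<^sub>j F\<^sub>i\<^sub>j(x))\<close>; the term \<open>\<lambda> = 0\<close> contributes \<open>|X|\<close>, the size of the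
space of tuples. For \<open>\<lambda> \<noteq> 0\<close> the phase \<open>f = \<Sum> \<lambda>\<^sub>i\<^sub>j F\<^sub>i\<^sub>j\<close> satisfies
\<open>f(u + h) - f(u) = B(u, h) + c(h)\<close> with \<open>B\<close> bilinear, and squaring out the sum gives
\<open>|\<Sum>\<^sub>x e(f x)|\<^sup>2 \<le> |X| |rad B|\<close>. Square-independence yields indices \<open>r\<^sub>0, s\<^sub>0\<close> for which
\<open>\<Sum>\<^sub>j (\<Sum>\<^sub>i \<lambda>\<^sub>i\<^sub>j \<gamma>\<^sub>i\<^sub>r\<^sub>0 \<gamma>\<^sub>i\<^sub>s\<^sub>0) M\<^sub>j\<close> is a nontrivial combination, hence of rank at least \<open>r\<close>;
testing \<open>B\<close> against tuples supported in coordinate \<open>r\<^sub>0\<close> shows that two elements of the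
radical which differ only in coordinate \<open>s\<^sub>0\<close> differ by a kernel vector of that matrix,
so \<open>|rad B| \<le> |X| p\<^sup>-\<^sup>r\<close>. Hence every nontrivial term is at most \<open>|X| p\<^sup>-\<^sup>r\<^sup>/\<^sup>2\<close>.\<close>

section \<open>The additive character of a prime field\<close>

lemma CHAR_eq_card_prime:
  assumes "prime (card (UNIV :: 'a::{field,finite} set))"
  shows "CHAR('a) = CARD('a)"
proof -
  have pos: "CHAR('a) > 0" by (rule finite_imp_CHAR_pos) simp
  have "prime CHAR('a)" by (rule prime_CHAR_semidom[OF pos])
  moreover have "CHAR('a) dvd CARD('a)" by (rule CHAR_dvd_CARD)
  ultimately show ?thesis using assms by (metis primes_dvd_imp_eq)
qed

lemma two_neq_zero_if_odd_prime_card: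
  assumes "prime (card (UNIV :: 'a::{field,finite} set))" and "odd CARD('a)"
  shows "(2::'a) \<noteq> 0"
proof
  assume "(2::'a) = 0"
  hence "(of_nat 2 :: 'a) = of_nat 0" by simp
  hence "[2 = 0] (mod CHAR('a))" by (simp only: of_nat_eq_iff_cong_CHAR)
  hence "CARD('a) dvd 2" using CHAR_eq_card_prime[OF assms(1)] by (simp add: cong_0_iff)
  hence "CARD('a) = 2" using assms(1) by (simp add: primes_dvd_imp_eq)
  thus False using assms(2) by simp
qed

lemma of_nat_onto_prime_field:
  assumes "prime (card (UNIV :: 'a::{field,finite} set))"
  shows "\<exists>k < CARD('a). of_nat k = (x::'a)"
proof -
  have "inj_on (of_nat :: nat \<Rightarrow> 'a) {..<CARD('a)}"
    by (intro inj_onI) (auto simp: of_nat_eq_iff_cong_CHAR CHAR_eq_card_prime[OF assms] cong_def)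
  hence "card ((of_nat :: nat \<Rightarrow> 'a) ` {..<CARD('a)}) = CARD('a)"
    by (simp add: card_image)
  hence "(of_nat :: nat \<Rightarrow> 'a) ` {..<CARD('a)} = UNIV"
    by (simp add: card_subset_eq)
  thus ?thesis by (metis UNIV_I imageE lessThan_iff)
qed

definition field_index :: "'a::{field,finite} \<Rightarrow> nat" where
  "field_index x = (SOME k. k < CARD('a) \<and> of_nat k = x)"

definition add_char :: "'a::{field,finite} \<Rightarrow> complex" where
  "add_char x = cis (2 * pi * real (field_index x) / real CARD('a))"

lemma
  assumes "prime (card (UNIV :: 'a::{field,finite} set))"
  shows field_index_less: "field_index (x::'a) < CARD('a)"
    and of_nat_field_index: "of_nat (field_index x) = x"
  using someI_ex[OF of_nat_onto_prime_field[OF assms, of x]] unfolding field_index_def by auto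

lemma cis_fraction_mod_eq:
  assumes "(k::nat) mod p = l mod p" "p > 0"
  shows "cis (2 * pi * real k / real p) = cis (2 * pi * real l / real p)"
proof -
  have shift: "cis (2 * pi * (t + real q * real p) / real p) = cis (2 * pi * t / real p)"
    for q :: nat and t
  proof -
    have "2 * pi * (t + real q * real p) / real p = 2 * pi * t / real p + 2 * pi * real q"
      using assms(2) by (simp add: field_simps)
    thus ?thesis by (simp add: cis_mult[symmetric])
  qed
  have "real k = real (k mod p) + real (k div p) * real p"
       "real l = real (l mod p) + real (l div p) * real p"
    by (metis mod_div_mult_eq of_nat_add of_nat_mult add.commute)+
  thus ?thesis by (metis shift assms(1))
qed

context
  assumes prime_card: "prime (card (UNIV :: 'a::{field,finite} set))"
begin

lemma add_char_add: "add_char ((x::'a) + y) = add_char x * add_char y"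
proof -
  have "of_nat (field_index (x + y)) = (of_nat (field_index x + field_index y) :: 'a)"
    by (simp add: of_nat_field_index[OF prime_card])
  hence "field_index (x + y) mod CARD('a) = (field_index x + field_index y) mod CARD('a)"
    by (simp only: of_nat_eq_iff_cong_CHAR CHAR_eq_card_prime[OF prime_card] cong_def)
  hence "add_char (x + y) = cis (2 * pi * real (field_index x + field_index y) / real CARD('a))"
    unfolding add_char_def by (metis cis_fraction_mod_eq prime_card prime_gt_0_nat)
  also have "\<dots> = add_char x * add_char y" unfolding add_char_def
    by (simp add: cis_mult[symmetric] add_divide_distrib distrib_left)
  finally show ?thesis .
qed

lemma add_char_zero: "add_char (0::'a) = 1"
proof -
  have "add_char (0::'a) = add_char (0::'a) * add_char (0::'a)"
    using add_char_add[of 0 0] by simp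
  moreover have "add_char (0::'a) \<noteq> 0" unfolding add_char_def by (metis cis_neq_zero)
  ultimately show ?thesis by (metis mult_cancel_left1)
qed

lemma norm_add_char [simp]: "norm (add_char (x::'a)) = 1"
  unfolding add_char_def by simp

lemma add_char_diff: "add_char ((x::'a) - y) = add_char x * cnj (add_char y)"
proof -
  have "add_char (- y) * add_char y = 1" using add_char_add[of "- y" y] add_char_zero by simp
  moreover have "cnj (add_char y) * add_char y = 1"
    using complex_norm_square[of "add_char y"] by (simp add: mult.commute)
  moreover have "add_char y \<noteq> 0" using norm_add_char[of y] by (metis norm_zero zero_neq_one)
  ultimately have "add_char (- y) = cnj (add_char y)" by (metis mult_cancel_right)
  thus ?thesis using add_char_add[of x "- y"] by simp
qed

lemma add_char_eq_1_iff: "add_char (x::'a) = 1 \<longleftrightarrow> x = 0"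
proof
  assume h: "add_char x = 1"
  let ?p = "real CARD('a)" and ?k = "real (field_index x)"
  have p: "?p > 0" using prime_card prime_gt_0_nat by simp
  from h have "cos (2 * pi * ?k / ?p) = 1" unfolding add_char_def
    by (metis cis.sel(1) one_complex.sel(1))
  then obtain i :: int where "2 * pi * ?k / ?p = 2 * pi * real_of_int i"
    by (metis cos_one_2pi_int mult.commute mult.left_commute)
  hence ki: "?k = ?p * real_of_int i" using p by (simp add: field_simps)
  have "?k < ?p" using field_index_less[OF prime_card, of x] by simp
  hence "i < 1" using ki p by (smt (verit) mult_le_cancel_left1 of_int_less_1_iff)
  moreover have "i \<ge> 0" using ki p
    by (smt (verit) of_nat_0_le_iff zero_le_mult_iff of_int_0_le_iff)
  ultimately have "i = 0" by linarith
  hence "field_index x = 0" using ki by simp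
  thus "x = 0" using of_nat_field_index[OF prime_card, of x] by simp
qed (simp add: add_char_zero)

lemma add_char_sum: "finite I \<Longrightarrow> add_char (\<Sum>k\<in>I. (f k :: 'a)) = (\<Prod>k\<in>I. add_char (f k))"
  by (induction I rule: finite_induct) (auto simp: add_char_zero add_char_add)

section \<open>Character sums\<close>

lemma sum_add_char_eq_0_if_translation:
  fixes l :: "'b \<Rightarrow> 'a" and shift :: "'b \<Rightarrow> 'b \<Rightarrow> 'b"
  assumes "finite X" and "bij_betw (shift z) X X" and "z \<in> X"
    and "\<And>x. x \<in> X \<Longrightarrow> l (shift z x) = l z + l x" and "l z \<noteq> 0"
  shows "(\<Sum>x\<in>X. add_char (l x)) = 0"
proof -
  have "(\<Sum>x\<in>X. add_char (l x)) = (\<Sum>x\<in>X. add_char (l (shift z x)))"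
    using sum.reindex_bij_betw[OF assms(2), of "\<lambda>y. add_char (l y)"] by simp
  also have "\<dots> = add_char (l z) * (\<Sum>x\<in>X. add_char (l x))"
    by (simp add: assms(4) add_char_add sum_distrib_left)
  finally have "(1 - add_char (l z)) * (\<Sum>x\<in>X. add_char (l x)) = 0" by (simp add: algebra_simps)
  moreover have "1 - add_char (l z) \<noteq> 0" using add_char_eq_1_iff assms(5) by simp
  ultimately show ?thesis by simp
qed

lemma sum_add_char_mult:
  "(\<Sum>t\<in>UNIV. add_char (t * (v::'a))) = (if v = 0 then of_nat CARD('a) else 0)"
proof (cases "v = 0")
  case False
  have "(\<Sum>t\<in>UNIV. add_char (t * v)) = 0"
    by (rule sum_add_char_eq_0_if_translation[of UNIV "(+)" 1])
       (auto simp: bij_betw_def inj_on_def False algebra_simps)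
  thus ?thesis using False by simp
qed (simp add: add_char_zero)

lemma sum_add_char_orthogonality:
  assumes "finite I"
  shows "(\<Sum>lam\<in>PiE I (\<lambda>_. UNIV). add_char (\<Sum>k\<in>I. lam k * (v k :: 'a)))
         = (if \<forall>k\<in>I. v k = 0 then of_nat CARD('a) ^ card I else 0)"
proof -
  have "(\<Sum>lam\<in>PiE I (\<lambda>_. UNIV). add_char (\<Sum>k\<in>I. lam k * v k))
      = (\<Sum>lam\<in>PiE I (\<lambda>_. UNIV). \<Prod>k\<in>I. add_char (lam k * v k))"
    using add_char_sum[OF assms] by simp
  also have "\<dots> = (\<Prod>k\<in>I. \<Sum>t\<in>UNIV. add_char (t * v k))"
    by (rule prod_sum_PiE[symmetric]) (auto simp: assms)
  also have "\<dots> = (\<Prod>k\<in>I. (if v k = 0 then of_nat CARD('a) else 0))"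
    by (simp add: sum_add_char_mult)
  also have "\<dots> = (if \<forall>k\<in>I. v k = 0 then of_nat CARD('a) ^ card I else 0)"
    using assms by (auto simp: prod_zero_iff)
  finally show ?thesis .
qed

text \<open>Weyl differencing: \<open>|S|\<^sup>2 = \<Sum>\<^sub>h e(c h) \<Sum>\<^sub>u e(B u h)\<close>, and the inner sum vanishes
  unless \<open>h\<close> is in the radical of \<open>B\<close>.\<close>
lemma norm_sum_add_char_square_le:
  fixes f c :: "'b \<Rightarrow> 'a" and B :: "'b \<Rightarrow> 'b \<Rightarrow> 'a" and shift :: "'b \<Rightarrow> 'b \<Rightarrow> 'b"
  assumes fin: "finite X"
    and bij: "\<And>u. u \<in> X \<Longrightarrow> bij_betw (shift u) X X"
    and diff: "\<And>u h. u \<in> X \<Longrightarrow> h \<in> X \<Longrightarrow> f (shift u h) - f u = B u h + c h"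
    and B_add: "\<And>u u' h. u \<in> X \<Longrightarrow> u' \<in> X \<Longrightarrow> h \<in> X \<Longrightarrow> B (shift u u') h = B u h + B u' h"
  shows "(norm (\<Sum>u\<in>X. add_char (f u)))\<^sup>2 \<le> real (card X) * real (card {h\<in>X. \<forall>u\<in>X. B u h = 0})"
proof -
  let ?S = "\<Sum>u\<in>X. add_char (f u)"
  let ?R = "{h\<in>X. \<forall>u\<in>X. B u h = 0}"
  have inner: "(\<Sum>u\<in>X. add_char (B u h)) = (if h \<in> ?R then of_nat (card X) else 0)"
    if h: "h \<in> X" for h
  proof (cases "h \<in> ?R")
    case False
    then obtain u0 where u0: "u0 \<in> X" "B u0 h \<noteq> 0" using h by auto
    have "(\<Sum>u\<in>X. add_char (B u h)) = 0"
      by (rule sum_add_char_eq_0_if_translation[where shift=shift and z=u0 and l="\<lambda>u. B u h",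
               OF fin bij[OF u0(1)] u0(1)])
         (use B_add h u0 in auto)
    thus ?thesis by (simp only: if_not_P[OF False])
  qed (simp add: add_char_zero)
  have "complex_of_real ((norm ?S)\<^sup>2) = ?S * cnj ?S" by (rule complex_norm_square)
  also have "\<dots> = (\<Sum>u\<in>X. \<Sum>v\<in>X. add_char (f u - f v))"
    by (simp add: cnj_sum sum_product add_char_diff)
  also have "\<dots> = (\<Sum>v\<in>X. \<Sum>u\<in>X. add_char (f u - f v))"
    by (rule sum.swap)
  also have "\<dots> = (\<Sum>u\<in>X. \<Sum>h\<in>X. add_char (f (shift u h) - f u))"
  proof (rule sum.cong[OF refl])
    fix u assume "u \<in> X"
    show "(\<Sum>v\<in>X. add_char (f v - f u)) = (\<Sum>h\<in>X. add_char (f (shift u h) - f u))"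
      using sum.reindex_bij_betw[OF bij[OF \<open>u \<in> X\<close>], of "\<lambda>v. add_char (f v - f u)"] by simp
  qed
  also have "\<dots> = (\<Sum>h\<in>X. add_char (c h) * (\<Sum>u\<in>X. add_char (B u h)))"
    by (subst sum.swap) (simp add: diff add_char_add sum_distrib_left mult.commute)
  also have "\<dots> = (\<Sum>h\<in>X. add_char (c h) * (if h \<in> ?R then of_nat (card X) else 0))"
    by (intro sum.cong refl) (simp add: inner)
  finally have eq: "complex_of_real ((norm ?S)\<^sup>2) = \<dots>" .
  have "(norm ?S)\<^sup>2 = norm (complex_of_real ((norm ?S)\<^sup>2))"
    by (simp only: norm_of_real abs_of_nonneg[OF zero_le_power2])
  also have "\<dots> \<le> (\<Sum>h\<in>X. norm (add_char (c h) * (if h \<in> ?R then of_nat (card X) else (0::complex))))"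
    unfolding eq by (rule norm_sum)
  also have "\<dots> = (\<Sum>h\<in>X. (if h \<in> ?R then real (card X) else 0))"
    by (intro sum.cong refl) (simp add: norm_mult)
  also have "\<dots> = real (card X) * real (card ?R)"
    using fin by (simp add: sum.If_cases Int_def)
  finally show ?thesis .
qed

end

section \<open>Matrices of large rank\<close>

lemma (in vec_space) inj_on_lincomb_PiE:
  assumes fin: "finite S" and S: "S \<subseteq> carrier_vec n" and indpt: "lin_indpt S"
  shows "inj_on (\<lambda>c. lincomb c S) (PiE S (\<lambda>_. UNIV))"
proof (rule inj_onI)
  fix c c' assume c: "c \<in> PiE S (\<lambda>_. UNIV)" and c': "c' \<in> PiE S (\<lambda>_. UNIV)"
    and eq: "lincomb c S = lincomb c' S"
  have zero: "lincomb (\<lambda>s. c s - c' s) S = 0\<^sub>v n"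
  proof (rule eq_vecI)
    fix i assume "i < dim_vec (0\<^sub>v n)"
    hence i: "i < n" by simp
    have "lincomb (\<lambda>s. c s - c' s) S $ i = lincomb c S $ i - lincomb c' S $ i"
      by (simp add: lincomb_index[OF i S] sum_subtractf left_diff_distrib)
    thus "lincomb (\<lambda>s. c s - c' s) S $ i = 0\<^sub>v n $ i" using eq i by simp
  qed (use lincomb_dim[OF fin S] in simp)
  have "c s = c' s" if "s \<in> S" for s
  proof (rule ccontr)
    assume "c s \<noteq> c' s"
    hence "lin_dep S" unfolding lin_dep_def using fin zero that
      by (intro exI[of _ S] exI[of _ "\<lambda>s. c s - c' s"] exI[of _ s]) auto
    thus False using indpt by simp
  qed
  thus "c = c'" using c c' by (intro PiE_ext) auto
qed

lemma exists_inj_on_mult_mat_vec_card_ge: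
  fixes G :: "'a::{field,finite} mat"
  assumes G: "G \<in> carrier_mat n n" and rk: "r \<le> vec_space.rank n G"
  shows "\<exists>T \<subseteq> carrier_vec n. CARD('a) ^ r \<le> card T \<and> inj_on (\<lambda>w. G *\<^sub>v w) T"
proof -
  interpret vec_space "TYPE('a)" n .
  let ?indpt_cols = "\<lambda>T. T \<subseteq> set (cols G) \<and> lin_indpt T"
  have "?indpt_cols {}" unfolding lin_dep_def by auto
  then obtain S where fin: "finite S" and max: "maximal S ?indpt_cols"
    using maximal_exists_superset[of "set (cols G)" ?indpt_cols "{}"] by auto
  have S_cols: "S \<subseteq> set (cols G)" and indpt: "lin_indpt S" using max unfolding maximal_def by auto
  have S: "S \<subseteq> carrier_vec n" using S_cols G cols_dim by blast
  have "lincomb c S \<in> col_space G" for c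
    unfolding col_space_def using fin S_cols by blast
  hence "\<exists>w\<in>carrier_vec n. G *\<^sub>v w = lincomb c S" for c
    using col_space_eq[OF G] G by auto
  then obtain W where W: "\<And>c. W c \<in> carrier_vec n" "\<And>c. G *\<^sub>v W c = lincomb c S"
    by metis
  have inj: "inj_on ((\<lambda>w. G *\<^sub>v w) \<circ> W) (PiE S (\<lambda>_. UNIV))"
    using inj_on_lincomb_PiE[OF fin S indpt] by (simp add: comp_def W(2))
  define T where "T = W ` PiE S (\<lambda>_. UNIV)"
  have "card T = CARD('a) ^ card S"
    unfolding T_def using card_image[OF inj_on_imageI2[OF inj]] fin by (simp add: card_PiE)
  moreover have "CARD('a) ^ r \<le> CARD('a) ^ card S"
    using rk rank_card_indpt[OF G max] by (intro power_increasing) (simp_all add: Suc_le_eq)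
  moreover have "T \<subseteq> carrier_vec n" unfolding T_def using W(1) by auto
  moreover have "inj_on (\<lambda>w. G *\<^sub>v w) T" unfolding T_def using inj by (rule inj_on_imageI)
  ultimately show ?thesis by auto
qed

section \<open>Tuples of vectors\<close>

definition tuple_add :: "(nat \<Rightarrow> 'a::field vec) \<Rightarrow> (nat \<Rightarrow> 'a vec) \<Rightarrow> nat \<Rightarrow> 'a vec" where
  "tuple_add xs ys = (\<lambda>r. xs r + ys r)"

definition unit_tuple :: "nat \<Rightarrow> nat \<Rightarrow> 'a::field vec \<Rightarrow> nat \<Rightarrow> 'a vec" where
  "unit_tuple n r0 y = (\<lambda>r. if r = r0 then y else 0\<^sub>v n)"

lemma tuple_space_carrier: "xs \<in> tuple_space n d \<Longrightarrow> xs r \<in> carrier_vec n"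
  unfolding tuple_space_def by (cases "r < d") auto

lemma tuple_space_dim [simp]: "xs \<in> tuple_space n d \<Longrightarrow> dim_vec (xs r) = n"
  by (metis tuple_space_carrier carrier_vecD)

lemma tuple_add_closed:
  "xs \<in> tuple_space n d \<Longrightarrow> ys \<in> tuple_space n d \<Longrightarrow> tuple_add xs ys \<in> tuple_space n d"
  unfolding tuple_space_def tuple_add_def by auto

lemma bij_betw_tuple_add:
  assumes u: "u \<in> tuple_space n d"
  shows "bij_betw (tuple_add u) (tuple_space n d) (tuple_space n d)"
proof (rule bij_betwI[where g = "\<lambda>v r. v r - u r"])
  show "tuple_add u \<in> tuple_space n d \<rightarrow> tuple_space n d" using tuple_add_closed[OF u] by auto
  show "(\<lambda>v r. v r - u r) \<in> tuple_space n d \<rightarrow> tuple_space n d"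
    using u unfolding tuple_space_def by auto
next
  fix x :: "nat \<Rightarrow> 'a vec" assume x: "x \<in> tuple_space n d"
  show "(\<lambda>r. tuple_add u x r - u r) = x"
    using x u unfolding tuple_add_def by (auto intro!: ext eq_vecI)
next
  fix x :: "nat \<Rightarrow> 'a vec" assume x: "x \<in> tuple_space n d"
  show "tuple_add u (\<lambda>r. x r - u r) = x"
    using x u unfolding tuple_add_def by (auto intro!: ext eq_vecI)
qed

lemma finite_carrier_vec: "finite (carrier_vec n :: 'a::finite vec set)"
proof -
  have "carrier_vec n \<subseteq> (\<lambda>f. vec n f) ` PiE {..<n} (\<lambda>_. (UNIV :: 'a set))"
  proof
    fix v :: "'a vec" assume v: "v \<in> carrier_vec n"
    hence "v = vec n (restrict (($) v) {..<n})" by (auto intro: eq_vecI)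
    moreover have "restrict (($) v) {..<n} \<in> PiE {..<n} (\<lambda>_. UNIV)" by simp
    ultimately show "v \<in> (\<lambda>f. vec n f) ` PiE {..<n} (\<lambda>_. UNIV)" by (rule image_eqI)
  qed
  thus ?thesis by (rule finite_subset) (intro finite_imageI finite_PiE; simp)
qed

lemma finite_tuple_space: "finite (tuple_space n d :: (nat \<Rightarrow> 'a::{field,finite} vec) set)"
proof -
  let ?extend = "\<lambda>g r. if r < d then g r else 0\<^sub>v n"
  have "tuple_space n d \<subseteq> ?extend ` PiE {..<d} (\<lambda>_. carrier_vec n :: 'a vec set)"
  proof
    fix xs :: "nat \<Rightarrow> 'a vec" assume xs: "xs \<in> tuple_space n d"
    hence "xs = ?extend (restrict xs {..<d})" unfolding tuple_space_def by (auto intro!: ext)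
    moreover have "restrict xs {..<d} \<in> PiE {..<d} (\<lambda>_. carrier_vec n)"
      using xs unfolding tuple_space_def by auto
    ultimately show "xs \<in> ?extend ` PiE {..<d} (\<lambda>_. carrier_vec n)" by (rule image_eqI)
  qed
  thus ?thesis by (rule finite_subset) (intro finite_imageI finite_PiE; simp add: finite_carrier_vec)
qed

lemma zero_tuple_in_tuple_space: "(\<lambda>_. 0\<^sub>v n) \<in> tuple_space n d"
  unfolding tuple_space_def by auto

lemma unit_tuple_in_tuple_space: "r0 < d \<Longrightarrow> y \<in> carrier_vec n \<Longrightarrow> unit_tuple n r0 y \<in> tuple_space n d"
  unfolding tuple_space_def unit_tuple_def by auto

lemma eval_form_carrier: "xs \<in> tuple_space n d \<Longrightarrow> eval_form n d g xs \<in> carrier_vec n"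
  unfolding eval_form_def by (rule finsum_vec_closed) (auto intro: tuple_space_carrier)

lemma eval_form_index:
  assumes xs: "xs \<in> tuple_space n d" and a: "a < n"
  shows "eval_form n d g xs $ a = (\<Sum>r<d. g r * xs r $ a)"
proof -
  have "eval_form n d g xs $ a = (\<Sum>r\<in>{0..<d}. (g r \<cdot>\<^sub>v xs r) $ a)"
    unfolding eval_form_def by (rule index_finsum_vec) (use tuple_space_carrier[OF xs] a in auto)
  also have "\<dots> = (\<Sum>r<d. g r * xs r $ a)"
    by (simp add: atLeast0LessThan)
       (metis a carrier_vecD index_smult_vec(1) tuple_space_carrier[OF xs])
  finally show ?thesis .
qed

lemma eval_form_add:
  assumes xs: "xs \<in> tuple_space n d" and ys: "ys \<in> tuple_space n d"
  shows "eval_form n d g (tuple_add xs ys) = eval_form n d g xs + eval_form n d g ys"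
proof (rule eq_vecI)
  fix a assume "a < dim_vec (eval_form n d g xs + eval_form n d g ys)"
  hence a: "a < n" by (metis carrier_vecD index_add_vec(2) eval_form_carrier ys)
  have "eval_form n d g (tuple_add xs ys) $ a = (\<Sum>r<d. g r * tuple_add xs ys r $ a)"
    by (rule eval_form_index[OF tuple_add_closed[OF xs ys] a])
  also have "\<dots> = (\<Sum>r<d. g r * xs r $ a) + (\<Sum>r<d. g r * ys r $ a)"
    using xs ys a by (simp add: tuple_add_def distrib_left sum.distrib)
  also have "\<dots> = (eval_form n d g xs + eval_form n d g ys) $ a"
    using a carrier_vecD[OF eval_form_carrier[OF ys]]
    by (simp add: eval_form_index[OF xs a] eval_form_index[OF ys a])
  finally show "eval_form n d g (tuple_add xs ys) $ a = (eval_form n d g xs + eval_form n d g ys) $ a" .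
qed (simp add: carrier_vecD[OF eval_form_carrier[OF tuple_add_closed[OF xs ys]]]
    carrier_vecD[OF eval_form_carrier[OF ys]])

lemma eval_form_unit_tuple:
  assumes r0: "r0 < d" and y: "y \<in> carrier_vec n"
  shows "eval_form n d g (unit_tuple n r0 y) = g r0 \<cdot>\<^sub>v y"
proof (rule eq_vecI)
  fix a assume "a < dim_vec (g r0 \<cdot>\<^sub>v y)"
  hence a: "a < n" using y by simp
  have "eval_form n d g (unit_tuple n r0 y) $ a = (\<Sum>r<d. g r * unit_tuple n r0 y r $ a)"
    using unit_tuple_in_tuple_space[OF r0 y] a by (rule eval_form_index)
  also have "\<dots> = (\<Sum>r<d. if r = r0 then g r * y $ a else 0)"
    by (intro sum.cong refl) (simp add: unit_tuple_def a)
  finally show "eval_form n d g (unit_tuple n r0 y) $ a = (g r0 \<cdot>\<^sub>v y) $ a" using r0 a y by simp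
qed (use eval_form_carrier[OF unit_tuple_in_tuple_space[OF r0 y]] y in simp)

lemma add_vec_left_cancel:
  fixes a b c :: "'a::ab_group_add vec"
  assumes "a \<in> carrier_vec n" "b \<in> carrier_vec n" "c \<in> carrier_vec n" "c + a = c + b"
  shows "a = b"
proof (rule eq_vecI)
  fix i assume "i < dim_vec b"
  hence "i < n" using assms by simp
  hence "c $ i + a $ i = c $ i + b $ i" using assms by (metis carrier_vecD index_add_vec(1))
  thus "a $ i = b $ i" by simp
qed (use assms in simp)

text \<open>The map \<open>(h, t) \<mapsto> h + t e\<^sub>s\<^sub>0\<close> is injective on \<open>R \<times> T\<close>.\<close>
lemma card_mult_le_card_tuple_space:
  fixes G :: "'a::{field,finite} mat"
  assumes G: "G \<in> carrier_mat n n" and s0: "s0 < d"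
    and R: "R \<subseteq> tuple_space n d" and T: "T \<subseteq> carrier_vec n"
    and inj: "inj_on (\<lambda>w. G *\<^sub>v w) T"
    and fibre: "\<And>h h'. h \<in> R \<Longrightarrow> h' \<in> R \<Longrightarrow> (\<forall>r. r \<noteq> s0 \<longrightarrow> h r = h' r) \<Longrightarrow>
                  G *\<^sub>v h s0 = G *\<^sub>v h' s0"
  shows "card R * card T \<le> card (tuple_space n d :: (nat \<Rightarrow> 'a vec) set)"
proof -
  let ?put = "\<lambda>(h, t). h(s0 := h s0 + t)"
  have into: "?put ` (R \<times> T) \<subseteq> tuple_space n d"
  proof clarify
    fix h t assume "h \<in> R" "t \<in> T"
    hence h: "h \<in> tuple_space n d" and t: "t \<in> carrier_vec n" using R T by auto
    show "h(s0 := h s0 + t) \<in> tuple_space n d"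
      using s0 t tuple_space_carrier[OF h, of s0] h unfolding tuple_space_def by auto
  qed
  have "inj_on ?put (R \<times> T)"
  proof (rule inj_onI, clarify)
    fix h t h' t' assume h: "h \<in> R" "t \<in> T" and h': "h' \<in> R" "t' \<in> T"
      and eq: "h(s0 := h s0 + t) = h'(s0 := h' s0 + t')"
    have agree: "\<forall>r. r \<noteq> s0 \<longrightarrow> h r = h' r"
    proof (intro allI impI)
      fix r assume "r \<noteq> s0"
      thus "h r = h' r" using fun_cong[OF eq, of r] by simp
    qed
    have e0: "h s0 + t = h' s0 + t'" using fun_cong[OF eq, of s0] by simp
    have hc: "h s0 \<in> carrier_vec n" "h' s0 \<in> carrier_vec n"
      using h h' R tuple_space_carrier by blast+
    have tc: "t \<in> carrier_vec n" "t' \<in> carrier_vec n" using h h' T by auto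
    have "G *\<^sub>v h s0 + G *\<^sub>v t = G *\<^sub>v (h s0 + t)"
      by (rule mult_add_distrib_mat_vec[OF G hc(1) tc(1), symmetric])
    also have "\<dots> = G *\<^sub>v h' s0 + G *\<^sub>v t'"
      unfolding e0 by (rule mult_add_distrib_mat_vec[OF G hc(2) tc(2)])
    also have "\<dots> = G *\<^sub>v h s0 + G *\<^sub>v t'" using fibre[OF h(1) h'(1) agree] by simp
    finally have "G *\<^sub>v t = G *\<^sub>v t'"
      by (rule add_vec_left_cancel[of _ n, rotated 3]) (use G hc tc in auto)
    hence t_eq: "t = t'" using inj h(2) h'(2) by (auto dest: inj_onD)
    hence "h s0 = h' s0" using e0 hc tc add_vec_left_cancel comm_add_vec by metis
    hence "h = h'" using agree by (intro ext) metis
    thus "h = h' \<and> t = t'" using t_eq by simp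
  qed
  hence "card (R \<times> T) \<le> card (tuple_space n d :: (nat \<Rightarrow> 'a vec) set)"
    using into finite_tuple_space by (rule card_inj_on_le)
  thus ?thesis by (simp add: card_cartesian_product)
qed

section \<open>The bilinear form of a matrix\<close>

definition bilin_mat :: "nat \<Rightarrow> 'a::field mat \<Rightarrow> 'a vec \<Rightarrow> 'a vec \<Rightarrow> 'a" where
  "bilin_mat n M v w = (\<Sum>a<n. \<Sum>b<n. v $ a * M $$ (a, b) * w $ b)"

lemma mult_mat_vec_index:
  "M \<in> carrier_mat n n \<Longrightarrow> w \<in> carrier_vec n \<Longrightarrow> a < n \<Longrightarrow> (M *\<^sub>v w) $ a = (\<Sum>b<n. M $$ (a, b) * w $ b)"
  by (simp add: scalar_prod_def atLeast0LessThan)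

lemma qform_eq_bilin_mat:
  assumes "M \<in> carrier_mat n n" "v \<in> carrier_vec n"
  shows "qform M v = bilin_mat n M v v"
  using assms unfolding qform_def bilin_mat_def
  by (simp add: scalar_prod_def atLeast0LessThan sum_distrib_left mult.assoc)

lemma bilin_mat_add_left:
  "v \<in> carrier_vec n \<Longrightarrow> w \<in> carrier_vec n \<Longrightarrow> bilin_mat n M (v + w) z = bilin_mat n M v z + bilin_mat n M w z"
  unfolding bilin_mat_def by (simp add: distrib_right sum.distrib)

lemma bilin_mat_add_right:
  "v \<in> carrier_vec n \<Longrightarrow> w \<in> carrier_vec n \<Longrightarrow> bilin_mat n M z (v + w) = bilin_mat n M z v + bilin_mat n M z w"
  unfolding bilin_mat_def by (simp add: distrib_left sum.distrib)

lemma bilin_mat_smult: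
  "v \<in> carrier_vec n \<Longrightarrow> w \<in> carrier_vec n \<Longrightarrow> bilin_mat n M (c \<cdot>\<^sub>v v) (e \<cdot>\<^sub>v w) = c * e * bilin_mat n M v w"
  unfolding bilin_mat_def by (simp add: sum_distrib_left ac_simps)

lemma bilin_mat_sym:
  assumes "M \<in> carrier_mat n n" "transpose_mat M = M"
  shows "bilin_mat n M v w = bilin_mat n M w v"
proof -
  have M: "M $$ (a, b) = M $$ (b, a)" if "a < n" "b < n" for a b
    using assms that by (metis carrier_matD index_transpose_mat(1))
  have "bilin_mat n M v w = (\<Sum>b<n. \<Sum>a<n. v $ a * M $$ (a, b) * w $ b)"
    unfolding bilin_mat_def by (rule sum.swap)
  also have "\<dots> = bilin_mat n M w v" unfolding bilin_mat_def
    by (intro sum.cong refl) (auto simp: M mult.commute mult.left_commute)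
  finally show ?thesis .
qed

lemma bilin_mat_unit_left:
  assumes a: "a < n"
  shows "bilin_mat n M (unit_vec n a) w = (\<Sum>b<n. M $$ (a, b) * w $ b)"
proof -
  have "bilin_mat n M (unit_vec n a) w = (\<Sum>a'<n. if a' = a then (\<Sum>b<n. M $$ (a, b) * w $ b) else 0)"
    unfolding bilin_mat_def by (intro sum.cong refl) (use a in auto)
  thus ?thesis using a by simp
qed

lemma bilin_mat_unit_unit: "a < n \<Longrightarrow> b < n \<Longrightarrow> bilin_mat n M (unit_vec n a) (unit_vec n b) = M $$ (a, b)"
  by (simp add: bilin_mat_unit_left if_distrib cong: if_cong)

lemma assoc_bilin_eq_bilin_mat:
  fixes M :: "'a::field mat"
  assumes M: "M \<in> carrier_mat n n" "transpose_mat M = M" and two: "(2::'a) \<noteq> 0"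
    and v: "v \<in> carrier_vec n" and w: "w \<in> carrier_vec n"
  shows "assoc_bilin M v w = bilin_mat n M v w"
proof -
  have "qform M (v + w) - qform M v - qform M w = bilin_mat n M v w + bilin_mat n M w v"
    using M v w by (simp add: qform_eq_bilin_mat bilin_mat_add_left bilin_mat_add_right)
  also have "\<dots> = 2 * bilin_mat n M v w" using bilin_mat_sym[OF M] by simp
  finally show ?thesis unfolding assoc_bilin_def using two by simp
qed

lemma mult_mat_vec_eq_0_if_bilin_mat_eq_0:
  assumes M: "M \<in> carrier_mat n n" and w: "w \<in> carrier_vec n"
    and zero: "\<And>y. y \<in> carrier_vec n \<Longrightarrow> bilin_mat n M y w = 0"
  shows "M *\<^sub>v w = 0\<^sub>v n"
proof (rule eq_vecI)
  fix a assume "a < dim_vec (0\<^sub>v n)"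
  hence a: "a < n" by simp
  have "(M *\<^sub>v w) $ a = bilin_mat n M (unit_vec n a) w"
    using mult_mat_vec_index[OF M w a] bilin_mat_unit_left[OF a, of M w] by simp
  thus "(M *\<^sub>v w) $ a = 0\<^sub>v n $ a" using zero a by simp
qed (use M in simp)

section \<open>The system of quadratic equations\<close>

lemma square_independent_imp_ex_nonzero:
  assumes "square_independent m d gamma" and "i0 < m" and "c i0 \<noteq> 0"
  shows "\<exists>r0<d. \<exists>s0<d. (\<Sum>i<m. c i * (gamma i r0 * gamma i s0)) \<noteq> 0"
  using assms unfolding square_independent_def by blast

lemma le_div_sqrt_if_square_le:
  fixes N x R q :: real
  assumes "N \<ge> 0" "x \<ge> 0" "q > 0" "N\<^sup>2 \<le> x * R" "R * q \<le> x"
  shows "N \<le> x / sqrt q"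
proof -
  have "(N * sqrt q)\<^sup>2 = N\<^sup>2 * q" using assms(3) by (simp add: power_mult_distrib)
  also have "\<dots> \<le> x * (R * q)" using assms(3,4) by (simp add: mult_right_mono mult.assoc)
  also have "\<dots> \<le> x\<^sup>2" using assms(2,5) by (simp add: mult_left_mono power2_eq_square)
  finally have "N * sqrt q \<le> x" using assms(2) by (rule power2_le_imp_le)
  thus ?thesis using assms(3) by (simp add: field_simps)
qed

lemma abs_div_minus_inverse_le:
  fixes N X P c :: real
  assumes X: "X > 0" and P: "P \<ge> 1" and c: "c \<ge> 0" and dev: "\<bar>P * N - X\<bar> \<le> (P - 1) * X * c"
  shows "\<bar>N / X - 1 / P\<bar> \<le> c"
proof -
  have "\<bar>N / X - 1 / P\<bar> = \<bar>P * N - X\<bar> / (P * X)"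
    using X P by (simp add: field_simps abs_divide)
  also have "\<dots> \<le> (P - 1) * X * c / (P * X)" by (rule divide_right_mono[OF dev]) (use X P in simp)
  also have "\<dots> = (P - 1) / P * c" using X P by (simp add: field_simps)
  also have "\<dots> \<le> 1 * c" using P c by (intro mult_right_mono) auto
  finally show ?thesis by simp
qed

locale quadratic_system =
  fixes n d m d2 r :: nat and gamma :: "nat \<Rightarrow> nat \<Rightarrow> 'a::{field,finite}"
    and Ms :: "nat \<Rightarrow> 'a mat" and phi :: "nat \<Rightarrow> (nat \<Rightarrow> 'a vec) \<Rightarrow> 'a vec" and b :: "nat \<Rightarrow> 'a vec"
  assumes prime_card: "prime CARD('a)" and two_neq_zero: "(2::'a) \<noteq> 0"
    and square_indep: "square_independent m d gamma"
    and quadratic: "\<forall>j<d2. quadratic_form_matrix n (Ms j)"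
    and rank_ge: "quad_map_rank_ge n d2 Ms r"
    and linear: "\<forall>i<m. tuple_linear n d d2 (phi i)"
    and b_carrier: "\<forall>i<m. b i \<in> carrier_vec d2"
begin

abbreviation tuples :: "(nat \<Rightarrow> 'a vec) set" where
  "tuples \<equiv> tuple_space n d"

definition lform :: "nat \<Rightarrow> (nat \<Rightarrow> 'a vec) \<Rightarrow> 'a vec" where
  "lform i xs = eval_form n d (gamma i) xs"

definition eqns :: "(nat \<times> nat) set" where
  "eqns = {..<m} \<times> {..<d2}"

definition defect :: "nat \<times> nat \<Rightarrow> (nat \<Rightarrow> 'a vec) \<Rightarrow> 'a" where
  "defect k xs = qform (Ms (snd k)) (lform (fst k) xs) - (phi (fst k) xs + b (fst k)) $ snd k"

definition phase :: "(nat \<times> nat \<Rightarrow> 'a) \<Rightarrow> (nat \<Rightarrow> 'a vec) \<Rightarrow> 'a" where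
  "phase lam xs = (\<Sum>k\<in>eqns. lam k * defect k xs)"

definition phase_bilin :: "(nat \<times> nat \<Rightarrow> 'a) \<Rightarrow> (nat \<Rightarrow> 'a vec) \<Rightarrow> (nat \<Rightarrow> 'a vec) \<Rightarrow> 'a" where
  "phase_bilin lam u h =
     (\<Sum>k\<in>eqns. lam k * (2 * bilin_mat n (Ms (snd k)) (lform (fst k) u) (lform (fst k) h)))"

definition phase_rest :: "(nat \<times> nat \<Rightarrow> 'a) \<Rightarrow> (nat \<Rightarrow> 'a vec) \<Rightarrow> 'a" where
  "phase_rest lam h =
     (\<Sum>k\<in>eqns. lam k * (bilin_mat n (Ms (snd k)) (lform (fst k) h) (lform (fst k) h) - phi (fst k) h $ snd k))"

definition radical :: "(nat \<times> nat \<Rightarrow> 'a) \<Rightarrow> (nat \<Rightarrow> 'a vec) set" where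
  "radical lam = {h \<in> tuples. \<forall>u\<in>tuples. phase_bilin lam u h = 0}"

definition pair_coeff :: "(nat \<times> nat \<Rightarrow> 'a) \<Rightarrow> nat \<Rightarrow> nat \<Rightarrow> nat \<Rightarrow> 'a" where
  "pair_coeff lam r0 s0 j = (\<Sum>i<m. lam (i, j) * (gamma i r0 * gamma i s0))"

definition comb_mat :: "(nat \<Rightarrow> 'a) \<Rightarrow> 'a mat" where
  "comb_mat c = mat n n (\<lambda>(a, a'). \<Sum>j<d2. c j * Ms j $$ (a, a'))"

lemma Ms_carrier: "j < d2 \<Longrightarrow> Ms j \<in> carrier_mat n n"
  using quadratic unfolding quadratic_form_matrix_def by auto

lemma Ms_sym: "j < d2 \<Longrightarrow> transpose_mat (Ms j) = Ms j"
  using quadratic unfolding quadratic_form_matrix_def by auto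

lemma lform_carrier: "xs \<in> tuples \<Longrightarrow> lform i xs \<in> carrier_vec n"
  unfolding lform_def by (rule eval_form_carrier)

lemma lform_add: "xs \<in> tuples \<Longrightarrow> ys \<in> tuples \<Longrightarrow> lform i (tuple_add xs ys) = lform i xs + lform i ys"
  unfolding lform_def by (rule eval_form_add)

lemma phi_carrier: "i < m \<Longrightarrow> xs \<in> tuples \<Longrightarrow> phi i xs \<in> carrier_vec d2"
  using linear unfolding tuple_linear_def by auto

lemma phi_add: "i < m \<Longrightarrow> xs \<in> tuples \<Longrightarrow> ys \<in> tuples \<Longrightarrow> phi i (tuple_add xs ys) = phi i xs + phi i ys"
  using linear unfolding tuple_linear_def tuple_add_def by auto

lemma defect_diff:
  assumes k: "k \<in> eqns" and u: "u \<in> tuples" and h: "h \<in> tuples"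
  shows "defect k (tuple_add u h) - defect k u
           = 2 * bilin_mat n (Ms (snd k)) (lform (fst k) u) (lform (fst k) h)
             + (bilin_mat n (Ms (snd k)) (lform (fst k) h) (lform (fst k) h) - phi (fst k) h $ snd k)"
proof -
  obtain i j where k_eq: "k = (i, j)" and i: "i < m" and j: "j < d2" using k unfolding eqns_def by auto
  let ?B = "bilin_mat n (Ms j)" and ?x = "lform i u" and ?y = "lform i h"
  have x: "?x \<in> carrier_vec n" and y: "?y \<in> carrier_vec n" using lform_carrier u h by auto
  have "qform (Ms j) (lform i (tuple_add u h)) = ?B (?x + ?y) (?x + ?y)"
    using lform_add[OF u h] qform_eq_bilin_mat[OF Ms_carrier[OF j]] x y by simp
  also have "\<dots> = ?B ?x ?x + ?B ?x ?y + (?B ?y ?x + ?B ?y ?y)"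
    using x y by (simp add: bilin_mat_add_left bilin_mat_add_right)
  also have "?B ?y ?x = ?B ?x ?y" by (rule bilin_mat_sym[OF Ms_carrier[OF j] Ms_sym[OF j]])
  finally have q: "qform (Ms j) (lform i (tuple_add u h)) = ?B ?x ?x + 2 * ?B ?x ?y + ?B ?y ?y"
    by simp
  have "b i \<in> carrier_vec d2" "phi i u \<in> carrier_vec d2" "phi i h \<in> carrier_vec d2"
    using b_carrier phi_carrier i u h by auto
  hence "(phi i (tuple_add u h) + b i) $ j = phi i u $ j + phi i h $ j + b i $ j"
        "(phi i u + b i) $ j = phi i u $ j + b i $ j"
    using phi_add[OF i u h] j by auto
  thus ?thesis unfolding defect_def k_eq
    using q qform_eq_bilin_mat[OF Ms_carrier[OF j] x] by (simp add: algebra_simps)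
qed

lemma phase_diff:
  assumes u: "u \<in> tuples" and h: "h \<in> tuples"
  shows "phase lam (tuple_add u h) - phase lam u = phase_bilin lam u h + phase_rest lam h"
proof -
  have "phase lam (tuple_add u h) - phase lam u = (\<Sum>k\<in>eqns. lam k * (defect k (tuple_add u h) - defect k u))"
    unfolding phase_def by (simp add: sum_subtractf[symmetric] right_diff_distrib)
  also have "\<dots> = phase_bilin lam u h + phase_rest lam h"
    unfolding phase_bilin_def phase_rest_def sum.distrib[symmetric]
    by (intro sum.cong refl) (simp add: defect_diff[OF _ u h] distrib_left)
  finally show ?thesis .
qed

lemma phase_bilin_add_left:
  "u \<in> tuples \<Longrightarrow> u' \<in> tuples \<Longrightarrow> h \<in> tuples \<Longrightarrow>
    phase_bilin lam (tuple_add u u') h = phase_bilin lam u h + phase_bilin lam u' h"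
  unfolding phase_bilin_def sum.distrib[symmetric]
  by (intro sum.cong refl) (simp add: lform_add bilin_mat_add_left lform_carrier algebra_simps)

lemma phase_bilin_add_right:
  "u \<in> tuples \<Longrightarrow> h \<in> tuples \<Longrightarrow> h' \<in> tuples \<Longrightarrow>
    phase_bilin lam u (tuple_add h h') = phase_bilin lam u h + phase_bilin lam u h'"
  unfolding phase_bilin_def sum.distrib[symmetric]
  by (intro sum.cong refl) (simp add: lform_add bilin_mat_add_right lform_carrier algebra_simps)

lemma norm_sum_phase_square_le:
  "(norm (\<Sum>u\<in>tuples. add_char (phase lam u)))\<^sup>2 \<le> real (card tuples) * real (card (radical lam))"
  unfolding radical_def
  by (rule norm_sum_add_char_square_le[where shift = tuple_add and f = "phase lam"
        and B = "phase_bilin lam" and c = "phase_rest lam"],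
      rule prime_card, rule finite_tuple_space, erule bij_betw_tuple_add,
      erule (1) phase_diff, erule (2) phase_bilin_add_left)

lemma comb_mat_carrier: "comb_mat c \<in> carrier_mat n n"
  unfolding comb_mat_def by simp

lemma rank_comb_mat_ge:
  assumes "\<exists>j<d2. c j \<noteq> 0"
  shows "r \<le> vec_space.rank n (comb_mat c)"
proof -
  have "assoc_bilin (Ms j) (unit_vec n a) (unit_vec n a') = Ms j $$ (a, a')"
    if "j < d2" "a < n" "a' < n" for j a a'
    using assoc_bilin_eq_bilin_mat[OF Ms_carrier[OF \<open>j < d2\<close>] Ms_sym[OF \<open>j < d2\<close>] two_neq_zero]
      bilin_mat_unit_unit that by simp
  hence "mat n n (\<lambda>(a, a'). \<Sum>j<d2. c j * assoc_bilin (Ms j) (unit_vec n a) (unit_vec n a'))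
         = comb_mat c"
    unfolding comb_mat_def by (intro eq_matI) auto
  moreover have "r \<le> bilin_rank n (\<lambda>x y. \<Sum>j<d2. c j * assoc_bilin (Ms j) x y)"
    using rank_ge assms unfolding quad_map_rank_ge_def by blast
  ultimately show ?thesis unfolding bilin_rank_def by simp
qed

lemma bilin_mat_comb_mat:
  "bilin_mat n (comb_mat c) y w = (\<Sum>j<d2. c j * bilin_mat n (Ms j) y w)"
proof -
  have "bilin_mat n (comb_mat c) y w = (\<Sum>a<n. \<Sum>a'<n. \<Sum>j<d2. c j * (y $ a * Ms j $$ (a, a') * w $ a'))"
    unfolding bilin_mat_def comb_mat_def
    by (intro sum.cong refl) (simp add: sum_distrib_left sum_distrib_right ac_simps)
  also have "\<dots> = (\<Sum>j<d2. \<Sum>a<n. \<Sum>a'<n. c j * (y $ a * Ms j $$ (a, a') * w $ a'))"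
    by (simp only: sum.swap[of _ "{..<d2}"])
  also have "\<dots> = (\<Sum>j<d2. c j * bilin_mat n (Ms j) y w)"
    unfolding bilin_mat_def by (simp add: sum_distrib_left)
  finally show ?thesis .
qed

lemma phase_bilin_unit_tuple:
  assumes r0: "r0 < d" and s0: "s0 < d" and y: "y \<in> carrier_vec n" and w: "w \<in> carrier_vec n"
  shows "phase_bilin lam (unit_tuple n r0 y) (unit_tuple n s0 w)
           = 2 * bilin_mat n (comb_mat (pair_coeff lam r0 s0)) y w"
proof -
  have "phase_bilin lam (unit_tuple n r0 y) (unit_tuple n s0 w)
      = (\<Sum>k\<in>eqns. 2 * (lam k * (gamma (fst k) r0 * gamma (fst k) s0) * bilin_mat n (Ms (snd k)) y w))"
    unfolding phase_bilin_def lform_def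
    by (intro sum.cong refl) (simp add: eval_form_unit_tuple r0 s0 y w bilin_mat_smult ac_simps)
  also have "\<dots> = 2 * (\<Sum>i<m. \<Sum>j<d2. lam (i, j) * (gamma i r0 * gamma i s0) * bilin_mat n (Ms j) y w)"
    unfolding eqns_def by (simp add: sum_distrib_left sum.cartesian_product case_prod_unfold)
  also have "\<dots> = 2 * (\<Sum>j<d2. \<Sum>i<m. lam (i, j) * (gamma i r0 * gamma i s0) * bilin_mat n (Ms j) y w)"
    by (subst sum.swap) (rule refl)
  also have "\<dots> = 2 * bilin_mat n (comb_mat (pair_coeff lam r0 s0)) y w"
    unfolding bilin_mat_comb_mat pair_coeff_def by (simp add: sum_distrib_right)
  finally show ?thesis .
qed

lemma exists_pair_coeff_nonzero:
  assumes "\<exists>k\<in>eqns. lam k \<noteq> 0"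
  obtains r0 s0 where "r0 < d" "s0 < d" "\<exists>j<d2. pair_coeff lam r0 s0 j \<noteq> 0"
proof -
  obtain i j where "i < m" "j < d2" "lam (i, j) \<noteq> 0" using assms unfolding eqns_def by auto
  moreover from this obtain r0 s0 where "r0 < d" "s0 < d" "pair_coeff lam r0 s0 j \<noteq> 0"
    using square_independent_imp_ex_nonzero[OF square_indep, of i "\<lambda>i. lam (i, j)"]
    unfolding pair_coeff_def by auto
  ultimately show ?thesis using that by blast
qed

text \<open>Testing \<open>h - h'\<close>, which is supported in coordinate \<open>s\<^sub>0\<close>, against tuples supported
  in coordinate \<open>r\<^sub>0\<close> shows that \<open>h s\<^sub>0 - h' s\<^sub>0\<close> lies in the kernel.\<close>
lemma radical_fibre:
  assumes r0: "r0 < d" and s0: "s0 < d"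
    and h: "h \<in> radical lam" and h': "h' \<in> radical lam" and agree: "\<forall>r. r \<noteq> s0 \<longrightarrow> h r = h' r"
  shows "comb_mat (pair_coeff lam r0 s0) *\<^sub>v h s0 = comb_mat (pair_coeff lam r0 s0) *\<^sub>v h' s0"
proof -
  let ?G = "comb_mat (pair_coeff lam r0 s0)"
  have hX: "h \<in> tuples" and h'X: "h' \<in> tuples" using h h' unfolding radical_def by auto
  have hc: "h s0 \<in> carrier_vec n" and h'c: "h' s0 \<in> carrier_vec n"
    using tuple_space_carrier hX h'X by blast+
  define w where "w = h s0 - h' s0"
  have wc: "w \<in> carrier_vec n" unfolding w_def using hc h'c by simp
  have sX: "unit_tuple n s0 w \<in> tuples" by (rule unit_tuple_in_tuple_space[OF s0 wc])
  have decomp: "tuple_add h' (unit_tuple n s0 w) = h"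
  proof
    fix r show "tuple_add h' (unit_tuple n s0 w) r = h r"
      using agree hc h'c tuple_space_carrier[OF h'X, of r]
      unfolding tuple_add_def unit_tuple_def w_def by (cases "r = s0") (auto intro: eq_vecI)
  qed
  have "bilin_mat n ?G y w = 0" if y: "y \<in> carrier_vec n" for y
  proof -
    have uX: "unit_tuple n r0 y \<in> tuples" by (rule unit_tuple_in_tuple_space[OF r0 y])
    have "0 = phase_bilin lam (unit_tuple n r0 y) h" using h uX unfolding radical_def by auto
    also have "\<dots> = phase_bilin lam (unit_tuple n r0 y) h' + phase_bilin lam (unit_tuple n r0 y) (unit_tuple n s0 w)"
      using phase_bilin_add_right[OF uX h'X sX] decomp by simp
    also have "\<dots> = 2 * bilin_mat n ?G y w"
      using h' uX phase_bilin_unit_tuple[OF r0 s0 y wc] unfolding radical_def by auto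
    finally show ?thesis using two_neq_zero by simp
  qed
  hence "?G *\<^sub>v w = 0\<^sub>v n" by (rule mult_mat_vec_eq_0_if_bilin_mat_eq_0[OF comb_mat_carrier wc])
  hence "?G *\<^sub>v h s0 - ?G *\<^sub>v h' s0 = 0\<^sub>v n"
    unfolding w_def by (simp add: mult_minus_distrib_mat_vec[OF comb_mat_carrier hc h'c])
  thus ?thesis using comb_mat_carrier hc h'c by (auto simp: vec_eq_iff)
qed

lemma card_radical_mult_le:
  assumes "\<exists>k\<in>eqns. lam k \<noteq> 0"
  shows "card (radical lam) * CARD('a) ^ r \<le> card tuples"
proof -
  obtain r0 s0 where r0: "r0 < d" and s0: "s0 < d" and nz: "\<exists>j<d2. pair_coeff lam r0 s0 j \<noteq> 0"
    using exists_pair_coeff_nonzero[OF assms] by blast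
  let ?G = "comb_mat (pair_coeff lam r0 s0)"
  obtain T where T: "T \<subseteq> carrier_vec n" and card_T: "CARD('a) ^ r \<le> card T"
    and inj: "inj_on (\<lambda>w. ?G *\<^sub>v w) T"
    using exists_inj_on_mult_mat_vec_card_ge[OF comb_mat_carrier rank_comb_mat_ge[OF nz]] by blast
  have "card (radical lam) * card T \<le> card tuples"
    by (rule card_mult_le_card_tuple_space[OF comb_mat_carrier s0 _ T inj])
       (auto simp: radical_def intro: radical_fibre[OF r0 s0, unfolded radical_def])
  thus ?thesis using card_T by (meson le_trans mult_le_mono2)
qed

lemma norm_sum_phase_le:
  assumes "\<exists>k\<in>eqns. lam k \<noteq> 0"
  shows "norm (\<Sum>u\<in>tuples. add_char (phase lam u)) \<le> real (card tuples) * real CARD('a) powr (- real r / 2)"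
proof -
  let ?p = "real CARD('a)"
  have p: "?p > 0" using prime_card prime_gt_0_nat by simp
  have "real (card (radical lam)) * ?p ^ r \<le> real (card tuples)"
    using card_radical_mult_le[OF assms] by (metis of_nat_le_iff of_nat_mult of_nat_power)
  hence "norm (\<Sum>u\<in>tuples. add_char (phase lam u)) \<le> real (card tuples) / sqrt (?p ^ r)"
    by (intro le_div_sqrt_if_square_le[OF norm_ge_zero of_nat_0_le_iff zero_less_power[OF p]
          norm_sum_phase_square_le])
  also have "sqrt (?p ^ r) = ?p powr (real r / 2)"
  proof -
    have "sqrt (?p ^ r) = (?p powr real r) powr (1 / 2)"
      using p by (simp add: powr_half_sqrt powr_realpow)
    thus ?thesis by (simp add: powr_powr)
  qed
  also have "real (card tuples) / ?p powr (real r / 2) = real (card tuples) * ?p powr (- real r / 2)"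
  proof -
    have "- real r / 2 = - (real r / 2)" by simp
    hence "?p powr (- real r / 2) = inverse (?p powr (real r / 2))" by (simp only: powr_minus)
    thus ?thesis by (simp only: divide_inverse)
  qed
  finally show ?thesis .
qed

lemma solution_iff_defects_zero:
  assumes "xs \<in> tuples"
  shows "(\<forall>i<m. quad_map d2 Ms (eval_form n d (gamma i) xs) = phi i xs + b i)
         \<longleftrightarrow> (\<forall>k\<in>eqns. defect k xs = 0)"
proof -
  have "quad_map d2 Ms (eval_form n d (gamma i) xs) = phi i xs + b i
        \<longleftrightarrow> (\<forall>j<d2. defect (i, j) xs = 0)" if i: "i < m" for i
  proof -
    have "dim_vec (phi i xs + b i) = d2" using b_carrier i by (simp add: carrier_vecD)
    thus ?thesis unfolding vec_eq_iff quad_map_def defect_def lform_def by auto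
  qed
  thus ?thesis unfolding eqns_def by auto
qed

lemma card_solutions_fourier:
  "of_nat (CARD('a) ^ card eqns) *
     of_nat (card {xs \<in> tuples. \<forall>i<m. quad_map d2 Ms (eval_form n d (gamma i) xs) = phi i xs + b i})
   = (\<Sum>lam\<in>PiE eqns (\<lambda>_. UNIV). \<Sum>xs\<in>tuples. add_char (phase lam xs))"
proof -
  have "finite eqns" unfolding eqns_def by simp
  have "finite tuples" by (rule finite_tuple_space)
  have "(\<Sum>lam\<in>PiE eqns (\<lambda>_. UNIV). \<Sum>xs\<in>tuples. add_char (phase lam xs))
      = (\<Sum>xs\<in>tuples. \<Sum>lam\<in>PiE eqns (\<lambda>_. UNIV). add_char (\<Sum>k\<in>eqns. lam k * defect k xs))"
    unfolding phase_def by (rule sum.swap)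
  also have "\<dots> = (\<Sum>xs\<in>tuples. if \<forall>k\<in>eqns. defect k xs = 0 then of_nat CARD('a) ^ card eqns else 0)"
    by (intro sum.cong refl) (rule sum_add_char_orthogonality[OF prime_card \<open>finite eqns\<close>])
  also have "\<dots> = of_nat (card {xs \<in> tuples. \<forall>k\<in>eqns. defect k xs = 0}) * of_nat CARD('a) ^ card eqns"
    using \<open>finite tuples\<close> by (simp add: sum.inter_filter[symmetric])
  also have "{xs \<in> tuples. \<forall>k\<in>eqns. defect k xs = 0}
      = {xs \<in> tuples. \<forall>i<m. quad_map d2 Ms (eval_form n d (gamma i) xs) = phi i xs + b i}"
    using solution_iff_defects_zero by blast
  finally show ?thesis by (simp add: mult.commute)
qed

lemma card_solutions_deviation:
  "\<bar>real (card {xs \<in> tuples. \<forall>i<m. quad_map d2 Ms (eval_form n d (gamma i) xs) = phi i xs + b i})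
      / real (card tuples) - 1 / real CARD('a) ^ (m * d2)\<bar>
   \<le> real CARD('a) powr (- real r / 2)"
proof -
  let ?N = "card {xs \<in> tuples. \<forall>i<m. quad_map d2 Ms (eval_form n d (gamma i) xs) = phi i xs + b i}"
  let ?L = "PiE eqns (\<lambda>_. UNIV :: 'a set)"
  let ?S = "\<lambda>lam. \<Sum>xs\<in>tuples. add_char (phase lam xs)"
  let ?P = "CARD('a) ^ (m * d2)"
  let ?c = "real CARD('a) powr (- real r / 2)"
  define zero where "zero = restrict (\<lambda>_. 0::'a) eqns"
  have card_eqns: "card eqns = m * d2" unfolding eqns_def by (simp add: card_cartesian_product)
  have fin_L: "finite ?L" unfolding eqns_def by (simp add: finite_PiE)
  have card_L: "card ?L = ?P" using card_eqns unfolding eqns_def by (simp add: card_PiE)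
  have zero_L: "zero \<in> ?L" unfolding zero_def by simp
  have "phase zero xs = 0" for xs unfolding phase_def zero_def by simp
  hence S_zero: "?S zero = of_nat (card tuples)" by (simp add: add_char_zero[OF prime_card])
  have S_le: "norm (?S lam) \<le> real (card tuples) * ?c" if lam: "lam \<in> ?L - {zero}" for lam
  proof (rule norm_sum_phase_le)
    show "\<exists>k\<in>eqns. lam k \<noteq> 0"
    proof (rule ccontr)
      assume "\<not> (\<exists>k\<in>eqns. lam k \<noteq> 0)"
      hence "lam = zero" using lam unfolding zero_def by (intro ext) (auto simp: PiE_iff extensional_def)
      thus False using lam by simp
    qed
  qed
  let ?A = "\<Sum>lam\<in>?L - {zero}. ?S lam"
  have "complex_of_nat ?P * of_nat ?N = of_nat (card tuples) + ?A"
    using card_solutions_fourier unfolding card_eqns sum.remove[OF fin_L zero_L] S_zero .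
  hence A: "?A = complex_of_real (real ?P * real ?N - real (card tuples))"
    by (simp add: algebra_simps)
  have "norm ?A \<le> real (card (?L - {zero})) * (real (card tuples) * ?c)"
    using norm_sum[of ?S "?L - {zero}"] sum_bounded_above[of "?L - {zero}" "\<lambda>lam. norm (?S lam)", OF S_le]
    by linarith
  also have "card (?L - {zero}) = ?P - 1" using card_L fin_L zero_L by (simp add: card_Diff_singleton)
  finally have "\<bar>real ?P * real ?N - real (card tuples)\<bar> \<le> (real ?P - 1) * real (card tuples) * ?c"
    unfolding A norm_of_real using prime_card prime_gt_0_nat by (simp add: of_nat_diff mult.assoc)
  moreover have "card tuples > 0" using finite_tuple_space zero_tuple_in_tuple_space card_gt_0_iff by blast
  moreover have "real ?P \<ge> 1" using prime_card prime_gt_0_nat by simp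
  ultimately show ?thesis by (intro abs_div_minus_inverse_le) auto
qed

end

theorem lemma3p6:
  fixes p n d m d2 r :: nat
    and gamma :: "nat \<Rightarrow> nat \<Rightarrow> 'a::{field,finite}"
    and Ms :: "nat \<Rightarrow> 'a mat"
    and phi :: "nat \<Rightarrow> (nat \<Rightarrow> 'a vec) \<Rightarrow> 'a vec"
    and b :: "nat \<Rightarrow> 'a vec"
  assumes "card (UNIV :: 'a set) = p" and "prime p" and "odd p"
    and "square_independent m d gamma"
    and "\<forall>j<d2. quadratic_form_matrix n (Ms j)"
    and "quad_map_rank_ge n d2 Ms r"
    and "\<forall>i<m. tuple_linear n d d2 (phi i)"
    and "\<forall>i<m. b i \<in> carrier_vec d2"
  shows "\<bar>real (card {xs \<in> tuple_space n d.
              \<forall>i<m. quad_map d2 Ms (eval_form n d (gamma i) xs) = phi i xs + b i})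
            / real (card (tuple_space n d :: (nat \<Rightarrow> 'a vec) set))
          - 1 / real p ^ (m * d2)\<bar> \<le> real p powr (- real r / 2)"
proof -
  have "(2::'a) \<noteq> 0" using two_neq_zero_if_odd_prime_card assms(1-3) by blast
  then interpret quadratic_system n d m d2 r gamma Ms phi b
    using assms by unfold_locales auto
  show ?thesis using card_solutions_deviation assms(1) by simp
qed

end
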